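(* Let $\theta\in\mathbb R\setminus\mathbb Q$. Then $H^1(\mathcal A_\theta^{alg},{}_{-1}\mathcal A_\theta^{alg*})=0$.
   Context: Let $\lambda=e^{2\pi i\theta}$. $\mathcal A_\theta^{alg}$ is the complex algebra of finite linear combinations $\sum a_{n,m}U_1^nU_2^m$ generated by invertible $U_1,U_2$ with $U_2U_1=\lambda U_1U_2$. Its linear dual $\mathcal A_\theta^{alg*}$ is identified with the space of formal series $\sum_{(n,m)\in\mathbb Z^2}\varphi_{n,m}U_1^nU_2^m$ with the standard bimodule structure. $\sigma$ is the automorphism $\sigma(U_j)=U_j^{-1}$, and ${}_{-1}\mathcal A_\theta^{alg*}$ is $\mathcal A_\theta^{alg*}$ with bimodule structure $\alpha\cdot a=\sigma(\alpha)a$, $a\cdot\alpha=a\alpha$. $H^\bullet$ is Hochschild cohomology. *)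

theory Defs
  imports Complex_Main
begin

text \<open>The algebraic noncommutative torus A_theta^alg: an element sum a_{n,m} U1^n U2^m
  is represented by its coefficient function int*int => complex with finite support.
  Basis monomials multiply as U1^a U2^b * U1^c U2^d = lambda^(b c) U1^(a+c) U2^(b+d),
  from U2 U1 = lambda U1 U2, lambda = exp(2 pi i theta).\<close>

definition lam :: "real \<Rightarrow> int \<Rightarrow> complex" where
  "lam \<theta> k = cis (2 * pi * \<theta> * real_of_int k)"

definition supp :: "(int \<times> int \<Rightarrow> complex) \<Rightarrow> (int \<times> int) set" where
  "supp x = {p. x p \<noteq> 0}"

definition fin :: "(int \<times> int \<Rightarrow> complex) \<Rightarrow> bool" where
  "fin x \<longleftrightarrow> finite (supp x)"

definition basis :: "int \<times> int \<Rightarrow> (int \<times> int \<Rightarrow> complex)" where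
  "basis k = (\<lambda>p. if p = k then 1 else 0)"

definition tmul :: "real \<Rightarrow> (int \<times> int \<Rightarrow> complex) \<Rightarrow> (int \<times> int \<Rightarrow> complex) \<Rightarrow> (int \<times> int \<Rightarrow> complex)" where
  "tmul \<theta> x y = (\<lambda>r. \<Sum>(p,q)\<in>{(p,q). p \<in> supp x \<and> q \<in> supp y \<and>
       fst p + fst q = fst r \<and> snd p + snd q = snd r}.
       x p * y q * lam \<theta> (snd p * fst q))"

text \<open>The linear dual A_theta^alg*: a linear functional is determined by its (arbitrary)
  values phi(n,m) on the basis monomials U1^n U2^m; it acts by the pairing below.\<close>
definition pair :: "(int \<times> int \<Rightarrow> complex) \<Rightarrow> (int \<times> int \<Rightarrow> complex) \<Rightarrow> complex" where
  "pair \<phi> x = (\<Sum>p\<in>supp x. x p * \<phi> p)"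

definition lact :: "real \<Rightarrow> (int \<times> int \<Rightarrow> complex) \<Rightarrow> (int \<times> int \<Rightarrow> complex) \<Rightarrow> (int \<times> int \<Rightarrow> complex)" where
  "lact \<theta> a \<phi> = (\<lambda>k. pair \<phi> (tmul \<theta> (basis k) a))"

definition ract :: "real \<Rightarrow> (int \<times> int \<Rightarrow> complex) \<Rightarrow> (int \<times> int \<Rightarrow> complex) \<Rightarrow> (int \<times> int \<Rightarrow> complex)" where
  "ract \<theta> \<phi> a = (\<lambda>k. pair \<phi> (tmul \<theta> a (basis k)))"

definition sigma :: "(int \<times> int \<Rightarrow> complex) \<Rightarrow> (int \<times> int \<Rightarrow> complex)" where
  "sigma x = (\<lambda>(n, m). x (-n, -m))"

text \<open>Left action of the twisted bimodule _{-1}A*: alpha . a = sigma(alpha) a.\<close>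
definition tw_lact :: "real \<Rightarrow> (int \<times> int \<Rightarrow> complex) \<Rightarrow> (int \<times> int \<Rightarrow> complex) \<Rightarrow> (int \<times> int \<Rightarrow> complex)" where
  "tw_lact \<theta> a \<phi> = lact \<theta> (sigma a) \<phi>"

definition hoch_cocycle1 :: "real \<Rightarrow> ((int \<times> int \<Rightarrow> complex) \<Rightarrow> (int \<times> int \<Rightarrow> complex)) \<Rightarrow> bool" where
  "hoch_cocycle1 \<theta> D \<longleftrightarrow>
     (\<forall>x y. fin x \<longrightarrow> fin y \<longrightarrow> D (\<lambda>p. x p + y p) = (\<lambda>k. D x k + D y k)) \<and>
     (\<forall>c x. fin x \<longrightarrow> D (\<lambda>p. c * x p) = (\<lambda>k. c * D x k)) \<and>
     (\<forall>a b. fin a \<longrightarrow> fin b \<longrightarrow>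
        D (tmul \<theta> a b) = (\<lambda>k. tw_lact \<theta> a (D b) k + ract \<theta> (D a) b k))"

definition hoch_coboundary1 :: "real \<Rightarrow> ((int \<times> int \<Rightarrow> complex) \<Rightarrow> (int \<times> int \<Rightarrow> complex)) \<Rightarrow> bool" where
  "hoch_coboundary1 \<theta> D \<longleftrightarrow>
     (\<exists>\<phi>. \<forall>a. fin a \<longrightarrow> D a = (\<lambda>k. tw_lact \<theta> a \<phi> k - ract \<theta> \<phi> a k))"

definition H1_twisted_dual_zero :: "real \<Rightarrow> bool" where
  "H1_twisted_dual_zero \<theta> \<longleftrightarrow> (\<forall>D. hoch_cocycle1 \<theta> D \<longrightarrow> hoch_coboundary1 \<theta> D)"

end

theory Submission
  imports Defs
begin

text \<open>
  Write \<open>\<Delta> p = D(U^p)\<close> for a 1-cochain \<open>D\<close>. On pairs of monomials the cocycle identity becomes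
  a linear relation on \<open>\<Delta>\<close> that every coboundary also satisfies, and which forces a solution
  vanishing on \<open>U1\<close> and \<open>U2\<close> to vanish on all monomials. It therefore suffices to find \<open>\<phi>\<close> with
  \<open>\<delta>\<phi>(U2) = D(U2)\<close> and \<open>\<delta>\<phi>(U1) = D(U1)\<close>. Along each column \<open>k1\<close> the first equation is a
  two-step linear recurrence in \<open>k2\<close> with nonzero coefficients, solvable with arbitrary values
  on the rows \<open>k2 = 0, 1\<close>; on those two rows the second equation is again such a recurrence.
  For \<open>D - \<delta>\<phi>\<close> the relation coming from \<open>U2 U1 = \<lambda> U1 U2\<close> then expresses its value on \<open>U1\<close>
  at row \<open>k2 + 1\<close> through that at row \<open>k2 - 1\<close>, so it vanishes on every row.
\<close>

lemma lam_add: "lam \<theta> (a + b) = lam \<theta> a * lam \<theta> b"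
  unfolding lam_def by (simp add: cis_mult ring_distribs)

lemma lam_0 [simp]: "lam \<theta> 0 = 1"
  by (simp add: lam_def)

lemma lam_neq_0 [simp]: "lam \<theta> a \<noteq> 0"
  by (simp add: lam_def)

lemma lam_mult_lam_uminus: "lam \<theta> a * lam \<theta> (- a) = 1"
  by (metis lam_add lam_0 add.right_inverse)

lemma lam_mult_lam_eq: "a + b = c + d \<Longrightarrow> lam \<theta> a * lam \<theta> b = lam \<theta> c * lam \<theta> d"
  by (metis lam_add)

lemma supp_basis [simp]: "supp (basis k) = {k}"
  by (auto simp: supp_def basis_def)

lemma fin_basis [simp]: "fin (basis k)"
  by (simp add: fin_def)

lemma tmul_basis_left:
  "tmul \<theta> (basis k) b = (\<lambda>r. lam \<theta> (snd k * (fst r - fst k)) * b (fst r - fst k, snd r - snd k))"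
proof
  fix r
  let ?q = "(fst r - fst k, snd r - snd k)"
  let ?S = "{(p,q). p \<in> supp (basis k) \<and> q \<in> supp b \<and> fst p + fst q = fst r \<and> snd p + snd q = snd r}"
  have "?S = (if b ?q = 0 then {} else {(k, ?q)})"
    by (cases k, cases r) (auto simp: supp_def basis_def algebra_simps split: if_splits)
  then show "tmul \<theta> (basis k) b r = lam \<theta> (snd k * (fst r - fst k)) * b ?q"
    unfolding tmul_def by (simp add: basis_def)
qed

lemma tmul_basis_right:
  "tmul \<theta> a (basis k) = (\<lambda>r. a (fst r - fst k, snd r - snd k) * lam \<theta> ((snd r - snd k) * fst k))"
proof
  fix r
  let ?q = "(fst r - fst k, snd r - snd k)"
  let ?S = "{(p,q). p \<in> supp a \<and> q \<in> supp (basis k) \<and> fst p + fst q = fst r \<and> snd p + snd q = snd r}"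
  have "?S = (if a ?q = 0 then {} else {(?q, k)})"
    by (cases k, cases r) (auto simp: supp_def basis_def algebra_simps split: if_splits)
  then show "tmul \<theta> a (basis k) r = a ?q * lam \<theta> ((snd r - snd k) * fst k)"
    unfolding tmul_def by (simp add: basis_def)
qed

lemma tmul_basis_basis:
  "tmul \<theta> (basis p) (basis q) = (\<lambda>r. lam \<theta> (snd p * fst q) * basis (fst p + fst q, snd p + snd q) r)"
  unfolding tmul_basis_left by (auto simp: basis_def fun_eq_iff)

lemma pair_reindex:
  assumes "inj m" "finite S" "\<And>r. x r \<noteq> 0 \<Longrightarrow> r \<in> m ` S"
  shows "pair \<phi> x = (\<Sum>p\<in>S. x (m p) * \<phi> (m p))"
proof -
  have "pair \<phi> x = (\<Sum>r\<in>m ` S. x r * \<phi> r)"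
    unfolding pair_def using assms(2,3) by (intro sum.mono_neutral_left) (auto simp: supp_def)
  also have "\<dots> = (\<Sum>p\<in>S. x (m p) * \<phi> (m p))"
    using assms(1) by (simp add: sum.reindex inj_on_subset)
  finally show ?thesis .
qed

lemma tw_lact_eq_sum:
  assumes "fin a"
  shows "tw_lact \<theta> a \<phi> k =
    (\<Sum>p\<in>supp a. a p * lam \<theta> (- (snd k * fst p)) * \<phi> (fst k - fst p, snd k - snd p))"
  unfolding tw_lact_def lact_def
proof (subst pair_reindex[where m = "\<lambda>p. (fst k - fst p, snd k - snd p)" and S = "supp a"])
  fix r assume "tmul \<theta> (basis k) (sigma a) r \<noteq> 0"
  then show "r \<in> (\<lambda>p. (fst k - fst p, snd k - snd p)) ` supp a"
    by (intro image_eqI[where x = "(fst k - fst r, snd k - snd r)"])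
       (auto simp: tmul_basis_left sigma_def supp_def)
qed (use assms in \<open>auto simp: inj_def prod_eq_iff fin_def tmul_basis_left sigma_def mult_ac\<close>)

lemma ract_eq_sum:
  assumes "fin a"
  shows "ract \<theta> \<phi> a k =
    (\<Sum>p\<in>supp a. a p * lam \<theta> (snd p * fst k) * \<phi> (fst p + fst k, snd p + snd k))"
  unfolding ract_def
proof (subst pair_reindex[where m = "\<lambda>p. (fst p + fst k, snd p + snd k)" and S = "supp a"])
  fix r assume "tmul \<theta> a (basis k) r \<noteq> 0"
  then show "r \<in> (\<lambda>p. (fst p + fst k, snd p + snd k)) ` supp a"
    by (intro image_eqI[where x = "(fst r - fst k, snd r - snd k)"])
       (auto simp: tmul_basis_right supp_def)
qed (use assms in \<open>auto simp: inj_def prod_eq_iff fin_def tmul_basis_right\<close>)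

text \<open>\<open>coboundary_on_basis \<theta> \<phi> (p1, p2) k\<close> is the coefficient at \<open>U^k\<close> of \<open>\<delta>\<phi>(U1^p1 U2^p2)\<close>.\<close>

definition coboundary_on_basis :: "real \<Rightarrow> (int \<times> int \<Rightarrow> complex) \<Rightarrow> int \<times> int \<Rightarrow> int \<times> int \<Rightarrow> complex" where
  "coboundary_on_basis \<theta> \<phi> p k = lam \<theta> (- (snd k * fst p)) * \<phi> (fst k - fst p, snd k - snd p)
     - lam \<theta> (snd p * fst k) * \<phi> (fst p + fst k, snd p + snd k)"

lemma coboundary_eq_sum:
  "fin a \<Longrightarrow> tw_lact \<theta> a \<phi> k - ract \<theta> \<phi> a k = (\<Sum>p\<in>supp a. a p * coboundary_on_basis \<theta> \<phi> p k)"
  by (simp add: tw_lact_eq_sum ract_eq_sum coboundary_on_basis_def sum_subtractf[symmetric]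
      right_diff_distrib mult.assoc)

lemma sum_basis_apply:
  "finite S \<Longrightarrow> (\<Sum>p\<in>S. c p * basis p r) = (if r \<in> S then c r else 0)"
  by (simp add: basis_def if_distrib sum.delta cong: if_cong)

lemma sum_basis_expansion: "fin a \<Longrightarrow> (\<lambda>r. \<Sum>p\<in>supp a. a p * basis p r) = a"
  by (auto simp: sum_basis_apply fin_def supp_def)

lemma fin_sum_basis: "finite S \<Longrightarrow> fin (\<lambda>r. \<Sum>p\<in>S. c p * basis p r)"
  unfolding fin_def by (rule finite_subset[of _ S]) (auto simp: sum_basis_apply supp_def)

lemma
  assumes "hoch_cocycle1 \<theta> D"
  shows cocycle_add: "fin x \<Longrightarrow> fin y \<Longrightarrow> D (\<lambda>p. x p + y p) = (\<lambda>k. D x k + D y k)"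
    and cocycle_smult: "fin x \<Longrightarrow> D (\<lambda>p. c * x p) = (\<lambda>k. c * D x k)"
    and cocycle_tmul: "fin a \<Longrightarrow> fin b \<Longrightarrow>
      D (tmul \<theta> a b) = (\<lambda>k. tw_lact \<theta> a (D b) k + ract \<theta> (D a) b k)"
  using assms unfolding hoch_cocycle1_def by blast+

lemma cocycle_sum_basis:
  assumes "hoch_cocycle1 \<theta> D" "finite S"
  shows "D (\<lambda>r. \<Sum>p\<in>S. c p * basis p r) = (\<lambda>k. \<Sum>p\<in>S. c p * D (basis p) k)"
  using assms(2)
proof (induction S rule: finite_induct)
  case empty
  show ?case
    using cocycle_smult[OF assms(1) fin_basis, of 0 "(0, 0)"] by simp
next
  case (insert q S)
  have "D (\<lambda>r. \<Sum>p\<in>insert q S. c p * basis p r) = D (\<lambda>r. c q * basis q r + (\<Sum>p\<in>S. c p * basis p r))"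
    using insert by simp
  also have "\<dots> = (\<lambda>k. D (\<lambda>r. c q * basis q r) k + D (\<lambda>r. \<Sum>p\<in>S. c p * basis p r) k)"
    using fin_sum_basis[of "{q}" c] fin_sum_basis[OF insert(1)]
    by (intro cocycle_add[OF assms(1)]) simp_all
  also have "\<dots> = (\<lambda>k. \<Sum>p\<in>insert q S. c p * D (basis p) k)"
    using insert cocycle_smult[OF assms(1) fin_basis, of "c q" q] by simp
  finally show ?case .
qed

lemma cocycle_eq_coboundary_if_eq_on_basis:
  assumes "hoch_cocycle1 \<theta> D" "\<And>p. D (basis p) = coboundary_on_basis \<theta> \<phi> p"
  shows "hoch_coboundary1 \<theta> D"
  unfolding hoch_coboundary1_def
proof (intro exI allI impI)
  fix a assume "fin a"
  have "D a = D (\<lambda>r. \<Sum>p\<in>supp a. a p * basis p r)"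
    by (simp only: sum_basis_expansion[OF \<open>fin a\<close>])
  also have "\<dots> = (\<lambda>k. \<Sum>p\<in>supp a. a p * D (basis p) k)"
    using \<open>fin a\<close> by (simp add: cocycle_sum_basis[OF assms(1)] fin_def)
  also have "\<dots> = (\<lambda>k. tw_lact \<theta> a \<phi> k - ract \<theta> \<phi> a k)"
    by (simp add: assms(2) coboundary_eq_sum[OF \<open>fin a\<close>])
  finally show "D a = (\<lambda>k. tw_lact \<theta> a \<phi> k - ract \<theta> \<phi> a k)" .
qed

text \<open>The cocycle identity for \<open>a = U^p\<close>, \<open>b = U^q\<close>, read off at \<open>U^k\<close>, with \<open>\<Delta> p = D(U^p)\<close>.\<close>

definition monomial_cocycle :: "real \<Rightarrow> (int \<times> int \<Rightarrow> int \<times> int \<Rightarrow> complex) \<Rightarrow> bool" where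
  "monomial_cocycle \<theta> \<Delta> \<longleftrightarrow> (\<forall>p1 p2 q1 q2 k1 k2.
     lam \<theta> (p2 * q1) * \<Delta> (p1 + q1, p2 + q2) (k1, k2) =
       lam \<theta> (- (k2 * p1)) * \<Delta> (q1, q2) (k1 - p1, k2 - p2)
       + lam \<theta> (q2 * k1) * \<Delta> (p1, p2) (q1 + k1, q2 + k2))"

lemma monomial_cocycleD:
  "monomial_cocycle \<theta> \<Delta> \<Longrightarrow> lam \<theta> (p2 * q1) * \<Delta> (p1 + q1, p2 + q2) (k1, k2) =
     lam \<theta> (- (k2 * p1)) * \<Delta> (q1, q2) (k1 - p1, k2 - p2)
     + lam \<theta> (q2 * k1) * \<Delta> (p1, p2) (q1 + k1, q2 + k2)"
  unfolding monomial_cocycle_def by blast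

lemma monomial_cocycle_of_cocycle:
  assumes "hoch_cocycle1 \<theta> D"
  shows "monomial_cocycle \<theta> (\<lambda>p. D (basis p))"
  unfolding monomial_cocycle_def
proof (intro allI)
  fix p1 p2 q1 q2 k1 k2 :: int
  have "lam \<theta> (p2 * q1) * D (basis (p1 + q1, p2 + q2)) (k1, k2) =
      D (tmul \<theta> (basis (p1, p2)) (basis (q1, q2))) (k1, k2)"
    by (simp add: tmul_basis_basis cocycle_smult[OF assms fin_basis])
  also have "\<dots> = tw_lact \<theta> (basis (p1, p2)) (D (basis (q1, q2))) (k1, k2)
      + ract \<theta> (D (basis (p1, p2))) (basis (q1, q2)) (k1, k2)"
    by (simp add: cocycle_tmul[OF assms])
  also have "\<dots> = lam \<theta> (- (k2 * p1)) * D (basis (q1, q2)) (k1 - p1, k2 - p2)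
      + lam \<theta> (q2 * k1) * D (basis (p1, p2)) (q1 + k1, q2 + k2)"
    by (simp add: tw_lact_eq_sum ract_eq_sum) (simp add: basis_def)
  finally show "lam \<theta> (p2 * q1) * D (basis (p1 + q1, p2 + q2)) (k1, k2) = \<dots>" .
qed

lemma monomial_cocycle_coboundary: "monomial_cocycle \<theta> (coboundary_on_basis \<theta> \<phi>)"
  unfolding monomial_cocycle_def
proof (intro allI)
  fix p1 p2 q1 q2 k1 k2 :: int
  have c1: "lam \<theta> (p2 * q1) * lam \<theta> (- (k2 * (p1 + q1))) = lam \<theta> (- (k2 * p1)) * lam \<theta> (- ((k2 - p2) * q1))"
    by (rule lam_mult_lam_eq) (simp add: algebra_simps)
  have c2: "lam \<theta> (- (k2 * p1)) * lam \<theta> (q2 * (k1 - p1)) = lam \<theta> (q2 * k1) * lam \<theta> (- ((q2 + k2) * p1))"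
    by (rule lam_mult_lam_eq) (simp add: algebra_simps)
  have c3: "lam \<theta> (p2 * q1) * lam \<theta> ((p2 + q2) * k1) = lam \<theta> (q2 * k1) * lam \<theta> (p2 * (q1 + k1))"
    by (rule lam_mult_lam_eq) (simp add: algebra_simps)
  have "\<phi> (k1 - (p1 + q1), k2 - (p2 + q2)) = \<phi> (k1 - p1 - q1, k2 - p2 - q2)"
    "\<phi> (q1 + (k1 - p1), q2 + (k2 - p2)) = \<phi> (q1 + k1 - p1, q2 + k2 - p2)"
    "\<phi> (p1 + (q1 + k1), p2 + (q2 + k2)) = \<phi> (p1 + q1 + k1, p2 + q2 + k2)"
    by (simp_all add: algebra_simps)
  with c1 c2 c3 show "lam \<theta> (p2 * q1) * coboundary_on_basis \<theta> \<phi> (p1 + q1, p2 + q2) (k1, k2) =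
      lam \<theta> (- (k2 * p1)) * coboundary_on_basis \<theta> \<phi> (q1, q2) (k1 - p1, k2 - p2)
      + lam \<theta> (q2 * k1) * coboundary_on_basis \<theta> \<phi> (p1, p2) (q1 + k1, q2 + k2)"
    unfolding coboundary_on_basis_def fst_conv snd_conv by (simp only:) algebra
qed

lemma monomial_cocycle_diff:
  "monomial_cocycle \<theta> \<Delta> \<Longrightarrow> monomial_cocycle \<theta> \<Delta>' \<Longrightarrow> monomial_cocycle \<theta> (\<lambda>p k. \<Delta> p k - \<Delta>' p k)"
  unfolding monomial_cocycle_def by (simp add: algebra_simps)

lemma monomial_cocycle_eq_0_if_generators:
  assumes cocycle: "monomial_cocycle \<theta> \<Delta>"
    and U1: "\<And>k. \<Delta> (1, 0) k = 0" and U2: "\<And>k. \<Delta> (0, 1) k = 0"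
  shows "\<Delta> p k = 0"
proof -
  note rel = monomial_cocycleD[OF cocycle]
  have step1: "\<Delta> (p1 + 1, p2) k = 0 \<and> \<Delta> (p1 - 1, p2) k = 0"
    if "\<And>k. \<Delta> (p1, p2) k = 0" for p1 p2 k
  proof (cases k)
    case (Pair k1 k2)
    have "lam \<theta> p2 * \<Delta> (p1 + 1, p2) (k1, k2) = 0"
      using rel[of p2 1 p1 0 k1 k2] U1 that by simp
    moreover have "\<Delta> (p1 - 1, p2) (1 + (k1 - 1), 0 + k2) = 0"
      using rel[of p2 1 "p1 - 1" 0 "k1 - 1" k2] U1 that by simp
    ultimately show ?thesis using Pair by simp
  qed
  have step2: "\<Delta> (p1, p2 + 1) k = 0 \<and> \<Delta> (p1, p2 - 1) k = 0"
    if "\<And>k. \<Delta> (p1, p2) k = 0" for p1 p2 k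
  proof (cases k)
    case (Pair k1 k2)
    have "\<Delta> (p1, p2 + 1) (k1, k2) = 0"
      using rel[of p2 0 p1 1 k1 k2] U2 that by simp
    moreover have "lam \<theta> k1 * \<Delta> (p1, p2 - 1) (0 + k1, 1 + (k2 - 1)) = 0"
      using rel[of "p2 - 1" 0 p1 1 k1 "k2 - 1"] U2 that by simp
    ultimately show ?thesis using Pair by simp
  qed
  have row: "\<forall>k. \<Delta> (n, 0) k = 0" for n
    by (induction n rule: int_induct[where k = 1]) (use U1 step1 in blast)+
  have "\<forall>k. \<Delta> (n, m) k = 0" for n m
    by (induction m rule: int_induct[where k = 0]) (use row step2 in blast)+
  then show ?thesis
    using surj_pair[of p] by blast
qed

lemma monomial_cocycle_commutation:
  assumes "monomial_cocycle \<theta> \<Delta>"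
  shows "lam \<theta> 1 * (lam \<theta> (- k2) * \<Delta> (0, 1) (k1 - 1, k2) + lam \<theta> k1 * \<Delta> (1, 0) (k1, k2 + 1)) =
    \<Delta> (1, 0) (k1, k2 - 1) + \<Delta> (0, 1) (k1 + 1, k2)"
proof -
  have "lam \<theta> 1 * \<Delta> (1, 1) (k1, k2) = \<Delta> (1, 0) (k1, k2 - 1) + \<Delta> (0, 1) (k1 + 1, k2)"
    using monomial_cocycleD[OF assms, of 1 1 0 0 k1 k2] by (simp add: add.commute)
  moreover have "\<Delta> (1, 1) (k1, k2) = lam \<theta> (- k2) * \<Delta> (0, 1) (k1 - 1, k2) + lam \<theta> k1 * \<Delta> (1, 0) (k1, k2 + 1)"
    using monomial_cocycleD[OF assms, of 0 0 1 1 k1 k2] by (simp add: add.commute)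
  ultimately show ?thesis by simp
qed

lemma monomial_cocycle_U1_eq_0:
  assumes cocycle: "monomial_cocycle \<theta> \<Delta>" and U2: "\<And>k. \<Delta> (0, 1) k = 0"
    and row0: "\<And>k1. \<Delta> (1, 0) (k1, 0) = 0" and row1: "\<And>k1. \<Delta> (1, 0) (k1, 1) = 0"
  shows "\<Delta> (1, 0) k = 0"
proof -
  have "\<Delta> (1, 0) (k1, k2 - 1) = lam \<theta> 1 * lam \<theta> k1 * \<Delta> (1, 0) (k1, k2 + 1)" for k1 k2
    using monomial_cocycle_commutation[OF cocycle, of k2 k1] U2 by (simp add: mult.assoc)
  then have step: "\<Delta> (1, 0) (k1, k2 + 1) = 0 \<longleftrightarrow> \<Delta> (1, 0) (k1, k2 - 1) = 0" for k1 k2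
    by simp
  have "\<forall>k1. \<Delta> (1, 0) (k1, k2) = 0 \<and> \<Delta> (1, 0) (k1, k2 + 1) = 0" for k2
  proof (induction k2 rule: int_induct[where k = 0])
    case base
    then show ?case using row0 row1 by simp
  next
    case (step1 i)
    then show ?case using step[of _ "i + 1"] by (simp add: add.assoc)
  next
    case (step2 i)
    then show ?case using step[of _ i] by simp
  qed
  then show ?thesis by (cases k) simp
qed

lemma linear_recurrence_solvable:
  fixes c d :: "int \<Rightarrow> 'a::field"
  assumes nonzero: "\<And>n. c n \<noteq> 0"
  shows "\<exists>x. x 0 = a \<and> (\<forall>n. x (n + 1) = c n * x n + d n)"
proof -
  define fw where "fw = rec_nat a (\<lambda>m y. c (int m) * y + d (int m))"
  define bw where "bw = rec_nat a (\<lambda>m y. (y - d (- int m - 1)) / c (- int m - 1))"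
  define x where "x n = (if n \<ge> 0 then fw (nat n) else bw (nat (- n)))" for n
  have "x (n + 1) = c n * x n + d n" for n
  proof (cases "n \<ge> 0")
    case True
    then have "nat (n + 1) = Suc (nat n)" by simp
    with True show ?thesis by (simp add: x_def fw_def)
  next
    case False
    define m where "m = nat (- n - 1)"
    have n: "n = - int m - 1" and "nat (- n) = Suc m"
      using False by (simp_all add: m_def)
    then have "x n = (bw m - d n) / c n"
      using False by (simp add: x_def bw_def)
    moreover have "x (n + 1) = bw m"
    proof (cases m)
      case (Suc j)
      then have "nat (- (n + 1)) = Suc j" by (simp add: n)
      with Suc show ?thesis using False by (simp add: x_def n)
    qed (simp add: x_def fw_def bw_def n)
    ultimately show ?thesis using nonzero[of n] by simp
  qed
  moreover have "x 0 = a" by (simp add: x_def fw_def)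
  ultimately show ?thesis by blast
qed

lemma linear_recurrence2_solvable:
  fixes c d :: "int \<Rightarrow> 'a::field"
  assumes nonzero: "\<And>n. c n \<noteq> 0"
  shows "\<exists>x. x 0 = a0 \<and> x 1 = a1 \<and> (\<forall>n. x (n + 2) = c n * x n + d n)"
proof -
  obtain y0 where y0: "y0 0 = a0" "\<forall>m. y0 (m + 1) = c (2 * m) * y0 m + d (2 * m)"
    using linear_recurrence_solvable[of "\<lambda>m. c (2 * m)" a0 "\<lambda>m. d (2 * m)"] nonzero by blast
  obtain y1 where y1: "y1 0 = a1" "\<forall>m. y1 (m + 1) = c (2 * m + 1) * y1 m + d (2 * m + 1)"
    using linear_recurrence_solvable[of "\<lambda>m. c (2 * m + 1)" a1 "\<lambda>m. d (2 * m + 1)"] nonzero by blast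
  define x where "x n = (if even n then y0 (n div 2) else y1 (n div 2))" for n :: int
  have "x (n + 2) = c n * x n + d n" for n
  proof (cases "even n")
    case True
    then obtain j where "n = 2 * j" by blast
    then show ?thesis using y0 by (simp add: x_def)
  next
    case False
    then obtain j where "n = 2 * j + 1" by (metis oddE)
    then show ?thesis using y1 by (simp add: x_def)
  qed
  moreover have "x 0 = a0" "x 1 = a1" using y0 y1 by (simp_all add: x_def)
  ultimately show ?thesis by blast
qed

lemma exists_cochain_matching_generators:
  fixes f g :: "int \<times> int \<Rightarrow> complex"
  shows "\<exists>\<phi>. (\<forall>k. coboundary_on_basis \<theta> \<phi> (0, 1) k = g k)
    \<and> (\<forall>k1. coboundary_on_basis \<theta> \<phi> (1, 0) (k1, 0) = f (k1, 0))
    \<and> (\<forall>k1. coboundary_on_basis \<theta> \<phi> (1, 0) (k1, 1) = f (k1, 1))"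
proof -
  obtain r0 :: "int \<Rightarrow> complex" where r0: "\<forall>n. r0 (n + 2) = 1 * r0 n + - f (n + 1, 0)"
    using linear_recurrence2_solvable[of "\<lambda>_. 1" 0 0 "\<lambda>n. - f (n + 1, 0)"] by auto
  obtain r1 :: "int \<Rightarrow> complex" where r1: "\<forall>n. r1 (n + 2) = lam \<theta> (- 1) * r1 n + - f (n + 1, 1)"
    using linear_recurrence2_solvable[of "\<lambda>_. lam \<theta> (- 1)" 0 0 "\<lambda>n. - f (n + 1, 1)"] by auto
  have "\<exists>C. C 0 = r0 k1 \<and> C 1 = r1 k1
    \<and> (\<forall>n. C (n + 2) = lam \<theta> (- k1) * C n + - lam \<theta> (- k1) * g (k1, n + 1))" for k1
    using linear_recurrence2_solvable[of "\<lambda>_. lam \<theta> (- k1)" "r0 k1" "r1 k1"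
      "\<lambda>n. - lam \<theta> (- k1) * g (k1, n + 1)"] by simp
  then obtain C where C: "\<And>k1. C k1 0 = r0 k1" "\<And>k1. C k1 1 = r1 k1"
    "\<And>k1 n. C k1 (n + 2) = lam \<theta> (- k1) * C k1 n + - lam \<theta> (- k1) * g (k1, n + 1)"
    using choice[of "\<lambda>k1 C. C 0 = r0 k1 \<and> C 1 = r1 k1
      \<and> (\<forall>n. C (n + 2) = lam \<theta> (- k1) * C n + - lam \<theta> (- k1) * g (k1, n + 1))"] by blast
  define \<phi> where "\<phi> k = C (fst k) (snd k)" for k
  have "coboundary_on_basis \<theta> \<phi> (0, 1) (k1, k2) = g (k1, k2)" for k1 k2
  proof -
    have "C k1 (k2 + 1) = lam \<theta> (- k1) * C k1 (k2 - 1) - lam \<theta> (- k1) * g (k1, k2)"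
      using C(3)[of k1 "k2 - 1"] by (simp add: add.commute)
    then have "lam \<theta> k1 * C k1 (k2 + 1) = C k1 (k2 - 1) - g (k1, k2)"
      using lam_mult_lam_uminus[of \<theta> k1] by algebra
    then show ?thesis by (simp add: coboundary_on_basis_def \<phi>_def add.commute)
  qed
  moreover have "coboundary_on_basis \<theta> \<phi> (1, 0) (k1, 0) = f (k1, 0)" for k1
    using r0[rule_format, of "k1 - 1"] C(1) by (simp add: coboundary_on_basis_def \<phi>_def add.commute)
  moreover have "coboundary_on_basis \<theta> \<phi> (1, 0) (k1, 1) = f (k1, 1)" for k1
    using r1[rule_format, of "k1 - 1"] C(2) by (simp add: coboundary_on_basis_def \<phi>_def add.commute)
  ultimately show ?thesis by auto
qed

theorem mainTheorem7:
  fixes \<theta> :: real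
  assumes "\<theta> \<notin> \<rat>"
  shows "H1_twisted_dual_zero \<theta>"
  unfolding H1_twisted_dual_zero_def
proof (intro allI impI)
  fix D assume cocycle: "hoch_cocycle1 \<theta> D"
  obtain \<phi> where \<phi>: "\<And>k. coboundary_on_basis \<theta> \<phi> (0, 1) k = D (basis (0, 1)) k"
    "\<And>k1. coboundary_on_basis \<theta> \<phi> (1, 0) (k1, 0) = D (basis (1, 0)) (k1, 0)"
    "\<And>k1. coboundary_on_basis \<theta> \<phi> (1, 0) (k1, 1) = D (basis (1, 0)) (k1, 1)"
    using exists_cochain_matching_generators[of \<theta> "D (basis (0, 1))" "D (basis (1, 0))"] by blast
  define \<Delta> where "\<Delta> p k = D (basis p) k - coboundary_on_basis \<theta> \<phi> p k" for p k
  have \<Delta>: "monomial_cocycle \<theta> \<Delta>"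
    unfolding \<Delta>_def
    by (intro monomial_cocycle_diff monomial_cocycle_of_cocycle[OF cocycle] monomial_cocycle_coboundary)
  have "\<Delta> (1, 0) k = 0" for k
    by (rule monomial_cocycle_U1_eq_0[OF \<Delta>]) (simp_all add: \<Delta>_def \<phi>)
  then have "\<Delta> p k = 0" for p k
    by (rule monomial_cocycle_eq_0_if_generators[OF \<Delta>]) (simp add: \<Delta>_def \<phi>)
  then show "hoch_coboundary1 \<theta> D"
    by (intro cocycle_eq_coboundary_if_eq_on_basis[OF cocycle, of \<phi>]) (simp add: \<Delta>_def fun_eq_iff)
qed

end
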